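(* Let $N\ge 2$ and let $D_{2N}=\langle r,s : r^N=s^2=1,\ srs=r^{-1}\rangle$ be the dihedral group of order $2N$. Then $D_{2N}$ is $R_4$ if and only if $N\equiv 2 \pmod 4$.
   Context: For a finite group $G$, $\overline{G}=G\cup\{\infty\}$, and $K_V$ denotes the complete graph on vertex set $V$. $G$ acts on $\overline{G}$ by right multiplication, with $\infty g=\infty$ for all $g\in G$; for a subgraph $F$ of $K_{\overline{G}}$ and $g\in G$, $Fg$ is the graph obtained by replacing every vertex $v$ by $vg$. A $k$-factor of $K_V$ is a spanning $k$-regular subgraph, and a $k$-factorization is a set of $k$-factors whose edge sets partition the edge set of $K_V$. A $k$-factorization $\mathcal{F}$ of $K_{\overline{G}}$ is $1$-rotational if $Fg\in\mathcal{F}$ for all $F\in\mathcal{F}$ and $g\in G$. A finite group $G$ is called $R_k$ if there exists a $1$-rotational $k$-factorization of $K_{\overline{G}}$. *)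

theory Defs
  imports "HOL-Algebra.Group"
begin

text \<open>A (simple) graph on a vertex set V is represented by its edge set; an edge is a
two-element subset of V. The complete graph K_V has all two-element subsets as edges.\<close>

definition complete_edges :: "'v set \<Rightarrow> 'v set set" where
  "complete_edges V = {{u, v} | u v. u \<in> V \<and> v \<in> V \<and> u \<noteq> v}"

definition k_factor :: "'v set \<Rightarrow> nat \<Rightarrow> 'v set set \<Rightarrow> bool" where
  "k_factor V k F \<longleftrightarrow> F \<subseteq> complete_edges V \<and> (\<forall>v\<in>V. card {e \<in> F. v \<in> e} = k)"

definition k_factorization :: "'v set \<Rightarrow> nat \<Rightarrow> 'v set set set \<Rightarrow> bool" where
  "k_factorization V k FF \<longleftrightarrow>
     (\<forall>F\<in>FF. k_factor V k F) \<and> (\<forall>e\<in>complete_edges V. \<exists>!F. F \<in> FF \<and> e \<in> F)"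

text \<open>The point \<infinity> is represented by None, group elements g by Some g.\<close>

definition Gbar :: "('a, 'b) monoid_scheme \<Rightarrow> 'a option set" where
  "Gbar G = Some ` carrier G \<union> {None}"

definition ract :: "('a, 'b) monoid_scheme \<Rightarrow> 'a \<Rightarrow> 'a option \<Rightarrow> 'a option" where
  "ract G g v = map_option (\<lambda>x. x \<otimes>\<^bsub>G\<^esub> g) v"

definition graph_translate :: "('a, 'b) monoid_scheme \<Rightarrow> 'a option set set \<Rightarrow> 'a \<Rightarrow> 'a option set set" where
  "graph_translate G F g = (\<lambda>e. ract G g ` e) ` F"

definition one_rotational :: "('a, 'b) monoid_scheme \<Rightarrow> nat \<Rightarrow> 'a option set set set \<Rightarrow> bool" where
  "one_rotational G k FF \<longleftrightarrow> k_factorization (Gbar G) k FF \<and>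
     (\<forall>F\<in>FF. \<forall>g\<in>carrier G. graph_translate G F g \<in> FF)"

definition is_R :: "('a, 'b) monoid_scheme \<Rightarrow> nat \<Rightarrow> bool" where
  "is_R G k \<longleftrightarrow> (\<exists>FF. one_rotational G k FF)"

text \<open>Element (i, b) stands for r^i s^b (0 \<le> i < N, b = True meaning s^1).
Using s r^j = r^(-j) s:  r^i s^a r^j s^b = r^(i \<plusminus> j) s^(a+b).\<close>

definition dihedral :: "nat \<Rightarrow> (nat \<times> bool) monoid" where
  "dihedral N = \<lparr> carrier = {..<N} \<times> UNIV,
     mult = (\<lambda>(i, a) (j, b). (if a then (i + N - j) mod N else (i + j) mod N, a \<noteq> b)),
     one = (0, False) \<rparr>"

end

theory Submission
  imports Defs "HOL-Number_Theory.Cong"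
begin

text \<open>Let \<open>\<F>\<close> be a 1-rotational \<open>k\<close>-factorization of \<open>K\<^bsub>G \<union> {\<infinity>}\<^esub>\<close> and \<open>F\<^sub>0\<close> its factor through
  \<open>{\<infinity>, 1}\<close>. Since \<open>F\<^sub>0 g\<close> is the unique factor through \<open>{\<infinity>, g}\<close>, the stabilizer of \<open>F\<^sub>0\<close> is the
  set \<open>S\<close> of the \<open>k\<close> neighbors of \<open>\<infinity>\<close> in \<open>F\<^sub>0\<close>; it is closed under multiplication and meets
  the conjugacy class of every involution. Counting the edges at \<open>\<infinity>\<close> also gives \<open>k | |G|\<close>.
  For \<open>G = D\<^sub>2\<^sub>N\<close> and \<open>k = 4\<close> this forces \<open>N\<close> even, and \<open>4 | N\<close> is impossible because \<open>S\<close>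
  would have at least five elements.

  Conversely, if \<open>N = 2m\<close> with \<open>m\<close> odd, the signed rotation index \<open>r\<^sup>i s\<^sup>b \<mapsto> (-1)\<^sup>b i mod m\<close>
  maps \<open>D\<^sub>2\<^sub>N\<close> four-to-one onto \<open>\<int>/m\<close>, and right multiplications act on \<open>\<int>/m\<close> by maps
  \<open>a \<mapsto> \<plusminus>a + t\<close>. These permute the factors of the standard 1-factorization of
  \<open>K\<^bsub>\<int>/m \<union> {\<infinity>}\<^esub>\<close>, whose pull-back is therefore a 1-rotational 4-factorization.\<close>

section \<open>The dihedral group\<close>

definition reflection_sign :: "bool \<Rightarrow> int" where
  "reflection_sign b = (if b then -1 else 1)"

lemma dihedral_mult:
  "(i, a) \<otimes>\<^bsub>dihedral N\<^esub> (j, b) = (if a then (i + N - j) mod N else (i + j) mod N, a \<noteq> b)"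
  by (simp add: dihedral_def)

lemma carrier_dihedral: "carrier (dihedral N) = {..<N} \<times> UNIV"
  by (simp add: dihedral_def)

lemma one_dihedral: "\<one>\<^bsub>dihedral N\<^esub> = (0, False)"
  by (simp add: dihedral_def)

lemma dihedral_mult_int:
  assumes "fst y < N"
  shows "int (fst (x \<otimes>\<^bsub>dihedral N\<^esub> y)) = (int (fst x) + reflection_sign (snd x) * int (fst y)) mod int N"
    and "snd (x \<otimes>\<^bsub>dihedral N\<^esub> y) = (snd x \<noteq> snd y)"
proof -
  obtain i a j b where xy: "x = (i, a)" "y = (j, b)" by fastforce
  have "int (i + N - j) = (int i - int j) + int N"
    using assms xy by simp
  then have "int ((i + N - j) mod N) = (int i - int j) mod int N"
    by (metis mod_add_self2 of_nat_mod)
  then show "int (fst (x \<otimes>\<^bsub>dihedral N\<^esub> y)) = (int (fst x) + reflection_sign (snd x) * int (fst y)) mod int N"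
    by (simp add: xy dihedral_mult reflection_sign_def zmod_int)
  show "snd (x \<otimes>\<^bsub>dihedral N\<^esub> y) = (snd x \<noteq> snd y)"
    by (simp add: xy dihedral_mult)
qed

lemma group_dihedral:
  assumes "0 < N"
  shows "group (dihedral N)"
proof (rule groupI)
  fix x y z
  assume xyz: "x \<in> carrier (dihedral N)" "y \<in> carrier (dihedral N)" "z \<in> carrier (dihedral N)"
  let ?M = "\<lambda>u v. u \<otimes>\<^bsub>dihedral N\<^esub> v"
  have lt: "fst u < N" if "u \<in> carrier (dihedral N)" for u
    using that by (auto simp: carrier_dihedral)
  have lt': "fst (?M u v) < N" for u v
    using assms by (cases u; cases v) (simp add: dihedral_mult)
  define \<epsilon> :: "nat \<times> bool \<Rightarrow> int" where "\<epsilon> u = reflection_sign (snd u)" for u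
  note mult = dihedral_mult_int[unfolded \<epsilon>_def[symmetric]]
  have "int (fst (?M (?M x y) z)) = ((int (fst x) + \<epsilon> x * int (fst y)) mod int N + \<epsilon> x * \<epsilon> y * int (fst z)) mod int N"
    using xyz by (simp add: mult lt \<epsilon>_def reflection_sign_def)
  also have "\<dots> = (int (fst x) + \<epsilon> x * (int (fst y) + \<epsilon> y * int (fst z))) mod int N"
    by (simp add: mod_simps algebra_simps)
  also have "\<dots> = (int (fst x) + \<epsilon> x * ((int (fst y) + \<epsilon> y * int (fst z)) mod int N)) mod int N"
    by (metis mod_add_right_eq mod_mult_right_eq)
  also have "\<dots> = int (fst (?M x (?M y z)))"
    using xyz by (simp add: mult lt lt')
  finally have "fst (?M (?M x y) z) = fst (?M x (?M y z))"
    by (simp only: of_nat_eq_iff)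
  moreover have "snd (?M (?M x y) z) = snd (?M x (?M y z))"
    using xyz by (cases "snd x"; cases "snd y") (simp_all add: mult lt lt')
  ultimately show "?M (?M x y) z = ?M x (?M y z)"
    by (simp add: prod_eq_iff)
next
  fix x assume "x \<in> carrier (dihedral N)"
  then obtain i a where x: "x = (i, a)" "i < N"
    by (auto simp: carrier_dihedral)
  show "\<exists>y\<in>carrier (dihedral N). y \<otimes>\<^bsub>dihedral N\<^esub> x = \<one>\<^bsub>dihedral N\<^esub>"
  proof (cases a)
    case True
    then show ?thesis
      using x by (intro bexI[of _ x]) (auto simp: dihedral_mult carrier_dihedral one_dihedral)
  next
    case False
    have "((N - i) mod N + i) mod N = 0"
      using x by (cases "i = 0") simp_all
    then show ?thesis
      using x assms False
      by (intro bexI[of _ "((N - i) mod N, False)"]) (auto simp: dihedral_mult carrier_dihedral one_dihedral)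
  qed
qed (use assms in \<open>auto simp: carrier_dihedral dihedral_mult one_dihedral\<close>)

section \<open>Factorizations of complete graphs with a point at infinity\<close>

lemma doubleton_mem_complete_edges_iff [simp]:
  "{u, v} \<in> complete_edges V \<longleftrightarrow> u \<in> V \<and> v \<in> V \<and> u \<noteq> v"
  by (auto simp: complete_edges_def doubleton_eq_iff)

lemma complete_edges_subset_Pow: "complete_edges V \<subseteq> Pow V"
  by (auto simp: complete_edges_def)

lemma complete_edges_option_cases:
  assumes "e \<in> complete_edges (insert None (Some ` V))"
  obtains x where "x \<in> V" "e = {None, Some x}"
    | x y where "x \<in> V" "y \<in> V" "x \<noteq> y" "e = {Some x, Some y}"
  using assms by (auto simp: complete_edges_def insert_commute)

lemma Gbar_eq: "Gbar G = insert None (Some ` carrier G)"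
  by (auto simp: Gbar_def)

lemma k_factorization_unique_factor:
  assumes "k_factorization V k FF" "F \<in> FF" "F' \<in> FF" "e \<in> complete_edges V" "e \<in> F" "e \<in> F'"
  shows "F = F'"
  using assms unfolding k_factorization_def by blast

lemma k_factorization_factor_exists:
  assumes "k_factorization V k FF" "e \<in> complete_edges V"
  obtains F where "F \<in> FF" "e \<in> F"
  using assms unfolding k_factorization_def by (meson ex1E)

definition infinity_neighbors :: "'a set \<Rightarrow> 'a option set set \<Rightarrow> 'a set" where
  "infinity_neighbors V F = {x \<in> V. {None, Some x} \<in> F}"

lemma card_infinity_neighbors:
  assumes "k_factor (insert None (Some ` V)) k F"
  shows "card (infinity_neighbors V F) = k"
proof -
  have "{e \<in> F. None \<in> e} = (\<lambda>x. {None, Some x}) ` infinity_neighbors V F"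
  proof (intro equalityI subsetI)
    fix e assume e: "e \<in> {e \<in> F. None \<in> e}"
    then have "e \<in> complete_edges (insert None (Some ` V))"
      using assms by (auto simp: k_factor_def)
    then show "e \<in> (\<lambda>x. {None, Some x}) ` infinity_neighbors V F"
      by (cases rule: complete_edges_option_cases) (use e in \<open>auto simp: infinity_neighbors_def\<close>)
  qed (auto simp: infinity_neighbors_def)
  moreover have "inj_on (\<lambda>x. {None, Some x}) (infinity_neighbors V F)"
    by (auto simp: inj_on_def doubleton_eq_iff)
  ultimately have "card (infinity_neighbors V F) = card {e \<in> F. None \<in> e}"
    by (simp add: card_image)
  also have "\<dots> = k"
    using assms by (simp add: k_factor_def)
  finally show ?thesis .
qed

text \<open>Every factor meets \<open>\<infinity>\<close> in exactly \<open>k\<close> edges, and these edges partition the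
  \<open>|V|\<close> edges at \<open>\<infinity>\<close>.\<close>
lemma card_eq_mult_card_k_factorization:
  assumes FF: "k_factorization (insert None (Some ` V)) k FF" and "finite V"
  shows "card V = k * card FF"
proof -
  let ?V' = "insert None (Some ` V)"
  have "finite FF"
  proof (rule finite_subset)
    show "FF \<subseteq> Pow (complete_edges ?V')"
      using FF by (auto simp: k_factorization_def k_factor_def)
    show "finite (Pow (complete_edges ?V'))"
      using \<open>finite V\<close> complete_edges_subset_Pow by (metis finite_Pow_iff finite_imageI finite_insert finite_subset)
  qed
  have "V = (\<Union>F\<in>FF. infinity_neighbors V F)"
    using FF by (auto simp: k_factorization_def infinity_neighbors_def)
  moreover have "card (\<Union>F\<in>FF. infinity_neighbors V F) = (\<Sum>F\<in>FF. card (infinity_neighbors V F))"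
  proof (rule card_UN_disjoint[OF \<open>finite FF\<close>])
    show "\<forall>F\<in>FF. finite (infinity_neighbors V F)"
      using \<open>finite V\<close> by (simp add: infinity_neighbors_def)
    show "\<forall>F\<in>FF. \<forall>F'\<in>FF. F \<noteq> F' \<longrightarrow> infinity_neighbors V F \<inter> infinity_neighbors V F' = {}"
    proof (intro ballI impI)
      fix F F' assume "F \<in> FF" "F' \<in> FF" "F \<noteq> F'"
      have False if "x \<in> infinity_neighbors V F" "x \<in> infinity_neighbors V F'" for x
        using k_factorization_unique_factor[OF FF \<open>F \<in> FF\<close> \<open>F' \<in> FF\<close>, of "{None, Some x}"]
          that \<open>F \<noteq> F'\<close> by (simp add: infinity_neighbors_def)
      then show "infinity_neighbors V F \<inter> infinity_neighbors V F' = {}"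
        by blast
    qed
  qed
  moreover have "card (infinity_neighbors V F) = k" if "F \<in> FF" for F
    using FF that by (simp add: k_factorization_def card_infinity_neighbors)
  ultimately show ?thesis
    by simp
qed

section \<open>The stabilizer of the factor through \<open>{\<infinity>, 1}\<close>\<close>

lemma graph_translate_memI: "e \<in> F \<Longrightarrow> ract G g ` e \<in> graph_translate G F g"
  by (simp add: graph_translate_def)

lemma one_rotational_factorization: "one_rotational G k FF \<Longrightarrow> k_factorization (Gbar G) k FF"
  by (simp add: one_rotational_def)

lemma one_rotational_factor_subset:
  "one_rotational G k FF \<Longrightarrow> F \<in> FF \<Longrightarrow> F \<subseteq> complete_edges (Gbar G)"
  by (simp add: one_rotational_def k_factorization_def k_factor_def)

lemma one_rotational_translate_mem:
  "one_rotational G k FF \<Longrightarrow> F \<in> FF \<Longrightarrow> g \<in> carrier G \<Longrightarrow> graph_translate G F g \<in> FF"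
  by (simp add: one_rotational_def)

definition meets_all_involution_classes :: "('a, 'b) monoid_scheme \<Rightarrow> 'a set \<Rightarrow> bool" where
  "meets_all_involution_classes G S \<longleftrightarrow>
     (\<forall>d\<in>carrier G. d \<noteq> \<one>\<^bsub>G\<^esub> \<and> d \<otimes>\<^bsub>G\<^esub> d = \<one>\<^bsub>G\<^esub> \<longrightarrow>
       (\<exists>p\<in>carrier G. inv\<^bsub>G\<^esub> p \<otimes>\<^bsub>G\<^esub> d \<otimes>\<^bsub>G\<^esub> p \<in> S))"

context group
begin

lemma ract_ract:
  "v \<in> Gbar G \<Longrightarrow> a \<in> carrier G \<Longrightarrow> b \<in> carrier G \<Longrightarrow> ract G b (ract G a v) = ract G (a \<otimes> b) v"
  by (auto simp: Gbar_def ract_def m_assoc)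

lemma graph_translate_translate:
  assumes "F \<subseteq> complete_edges (Gbar G)" "a \<in> carrier G" "b \<in> carrier G"
  shows "graph_translate G (graph_translate G F a) b = graph_translate G F (a \<otimes> b)"
proof -
  have "ract G b ` ract G a ` e = ract G (a \<otimes> b) ` e" if "e \<in> F" for e
  proof -
    have "e \<subseteq> Gbar G"
      using assms(1) that complete_edges_subset_Pow by blast
    then show ?thesis
      using ract_ract assms(2,3) by (force simp: image_image intro!: image_cong)
  qed
  then show ?thesis
    by (simp add: graph_translate_def image_image cong: image_cong)
qed

lemma graph_translate_one:
  assumes "F \<subseteq> complete_edges (Gbar G)"
  shows "graph_translate G F \<one> = F"
proof -
  have "ract G \<one> ` e = e" if "e \<in> F" for e
  proof -
    have "e \<subseteq> Gbar G"
      using assms that complete_edges_subset_Pow by blast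
    then show ?thesis
      by (force simp: Gbar_def ract_def)
  qed
  then show ?thesis
    by (simp add: graph_translate_def cong: image_cong)
qed

context
  fixes k FF F0
  assumes rotational: "one_rotational G k FF"
    and F0: "F0 \<in> FF" "{None, Some \<one>} \<in> F0"
begin

text \<open>Both factors contain the edge \<open>{\<infinity>, g}\<close>.\<close>
lemma one_rotational_factor_eq_translate:
  assumes "F \<in> FF" "g \<in> carrier G" "{None, Some g} \<in> F"
  shows "F = graph_translate G F0 g"
proof (rule k_factorization_unique_factor[OF one_rotational_factorization[OF rotational]])
  show "{None, Some g} \<in> graph_translate G F0 g"
    using graph_translate_memI[OF F0(2), of G g] assms(2) by (simp add: ract_def)
qed (use assms F0 one_rotational_translate_mem[OF rotational] in \<open>auto simp: Gbar_def\<close>)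

lemma one_rotational_translate_eq_iff:
  assumes "g \<in> carrier G"
  shows "graph_translate G F0 g = F0 \<longleftrightarrow> g \<in> infinity_neighbors (carrier G) F0"
proof
  assume "graph_translate G F0 g = F0"
  then show "g \<in> infinity_neighbors (carrier G) F0"
    using graph_translate_memI[OF F0(2), of G g] assms by (simp add: ract_def infinity_neighbors_def)
next
  assume "g \<in> infinity_neighbors (carrier G) F0"
  then show "graph_translate G F0 g = F0"
    using one_rotational_factor_eq_translate[OF F0(1) assms] by (simp add: infinity_neighbors_def)
qed

lemma one_rotational_neighbors_mult_closed:
  assumes "a \<in> infinity_neighbors (carrier G) F0" "b \<in> infinity_neighbors (carrier G) F0"
  shows "a \<otimes> b \<in> infinity_neighbors (carrier G) F0"
proof -
  have ab: "a \<in> carrier G" "b \<in> carrier G"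
    using assms by (auto simp: infinity_neighbors_def)
  then have "graph_translate G F0 a = F0" "graph_translate G F0 b = F0"
    using assms one_rotational_translate_eq_iff by auto
  then have "graph_translate G F0 (a \<otimes> b) = F0"
    using graph_translate_translate[OF one_rotational_factor_subset[OF rotational F0(1)] ab] by simp
  then show ?thesis
    using one_rotational_translate_eq_iff ab by simp
qed

text \<open>The factor through the edge \<open>{1, d}\<close> is some \<open>F0 g\<close>, so \<open>F0\<close> contains
  \<open>{p, d p}\<close> with \<open>p = g\<inverse>\<close>; the involution \<open>p\<inverse> d p\<close> swaps the two ends of this edge
  and hence fixes \<open>F0\<close>.\<close>
lemma one_rotational_involution_conjugate:
  assumes "0 < k" "d \<in> carrier G" "d \<noteq> \<one>" "d \<otimes> d = \<one>"
  shows "\<exists>p\<in>carrier G. inv p \<otimes> d \<otimes> p \<in> infinity_neighbors (carrier G) F0"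
proof -
  have "{Some \<one>, Some d} \<in> complete_edges (Gbar G)"
    using assms by (simp add: Gbar_def)
  then obtain F where F: "F \<in> FF" "{Some \<one>, Some d} \<in> F"
    by (rule k_factorization_factor_exists[OF one_rotational_factorization[OF rotational]])
  have "card (infinity_neighbors (carrier G) F) = k"
    using one_rotational_factorization[OF rotational] F(1)
    by (simp add: k_factorization_def card_infinity_neighbors Gbar_eq)
  then have "infinity_neighbors (carrier G) F \<noteq> {}"
    using \<open>0 < k\<close> by auto
  then obtain g where g: "g \<in> carrier G" "{None, Some g} \<in> F"
    unfolding infinity_neighbors_def by blast
  define p where "p = inv g"
  have p: "p \<in> carrier G"
    using g by (simp add: p_def)
  have "graph_translate G F p = F0"
    using one_rotational_factor_eq_translate[OF F(1) g] g
    by (simp add: p_def graph_translate_translate graph_translate_one one_rotational_factor_subset[OF rotational F0(1)])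
  moreover have "ract G p ` {Some \<one>, Some d} = {Some p, Some (d \<otimes> p)}"
    using p by (simp add: ract_def)
  ultimately have e: "{Some p, Some (d \<otimes> p)} \<in> F0"
    using graph_translate_memI[OF F(2), of G p] by simp
  define w where "w = inv p \<otimes> d \<otimes> p"
  have w: "w \<in> carrier G"
    using p assms(2) by (simp add: w_def)
  have pw: "p \<otimes> w = d \<otimes> p"
    using p assms(2) by (simp add: w_def m_assoc[symmetric])
  have "d \<otimes> p \<otimes> w = d \<otimes> (d \<otimes> p)"
    using pw p w assms(2) by (simp add: m_assoc)
  also have "\<dots> = p"
    using p assms(2,4) by (simp add: m_assoc[symmetric])
  finally have "ract G w ` {Some p, Some (d \<otimes> p)} = {Some p, Some (d \<otimes> p)}"
    using pw by (auto simp: ract_def)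
  then have "{Some p, Some (d \<otimes> p)} \<in> graph_translate G F0 w"
    using graph_translate_memI[OF e, of G w] by simp
  moreover have "p \<noteq> d \<otimes> p"
    using p assms(2,3) by simp
  ultimately have "graph_translate G F0 w = F0"
    using k_factorization_unique_factor[OF one_rotational_factorization[OF rotational]
        one_rotational_translate_mem[OF rotational F0(1) w] F0(1) _ _ e] p assms(2)
    by (simp add: Gbar_def)
  then show ?thesis
    using one_rotational_translate_eq_iff w p by (auto simp: w_def)
qed

end

lemma one_rotational_stabilizer:
  assumes rotational: "one_rotational G k FF" and "0 < k"
  obtains S where "submonoid S G" "card S = k" "meets_all_involution_classes G S"
proof -
  have "{None, Some \<one>} \<in> complete_edges (Gbar G)"
    by (simp add: Gbar_def)
  then obtain F0 where F0: "F0 \<in> FF" "{None, Some \<one>} \<in> F0"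
    by (rule k_factorization_factor_exists[OF one_rotational_factorization[OF rotational]])
  show thesis
  proof (rule that)
    show "submonoid (infinity_neighbors (carrier G) F0) G"
      by (rule submonoid.intro)
        (use F0 one_rotational_neighbors_mult_closed[OF rotational F0] in \<open>auto simp: infinity_neighbors_def\<close>)
    show "card (infinity_neighbors (carrier G) F0) = k"
      using one_rotational_factorization[OF rotational] F0(1)
      by (simp add: k_factorization_def card_infinity_neighbors Gbar_eq)
    show "meets_all_involution_classes G (infinity_neighbors (carrier G) F0)"
      using one_rotational_involution_conjugate[OF rotational F0 \<open>0 < k\<close>]
      by (simp add: meets_all_involution_classes_def)
  qed
qed

end

section \<open>Necessity\<close>

lemma dihedral_mult_even_iff:
  assumes "even N" "fst y < N"
  shows "even (fst (x \<otimes>\<^bsub>dihedral N\<^esub> y)) \<longleftrightarrow> even (fst x + fst y)"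
proof -
  have "even (fst (x \<otimes>\<^bsub>dihedral N\<^esub> y)) \<longleftrightarrow> even (int (fst x) + reflection_sign (snd x) * int (fst y))"
    using dihedral_mult_int(1)[OF assms(2), of x] \<open>even N\<close> by (metis dvd_mod_iff even_of_nat even_of_nat_iff)
  also have "\<dots> \<longleftrightarrow> even (fst x + fst y)"
    by (cases "snd x") (simp_all add: reflection_sign_def)
  finally show ?thesis .
qed

lemma dihedral_conjugate_invariants:
  assumes "even N" "0 < N" "p \<in> carrier (dihedral N)" "d \<in> carrier (dihedral N)"
  shows "even (fst (inv\<^bsub>dihedral N\<^esub> p \<otimes>\<^bsub>dihedral N\<^esub> d \<otimes>\<^bsub>dihedral N\<^esub> p)) \<longleftrightarrow> even (fst d)"
    and "snd (inv\<^bsub>dihedral N\<^esub> p \<otimes>\<^bsub>dihedral N\<^esub> d \<otimes>\<^bsub>dihedral N\<^esub> p) = snd d"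
proof -
  interpret group "dihedral N"
    using group_dihedral \<open>0 < N\<close> .
  define c where "c = inv\<^bsub>dihedral N\<^esub> p \<otimes>\<^bsub>dihedral N\<^esub> d \<otimes>\<^bsub>dihedral N\<^esub> p"
  have c: "c \<in> carrier (dihedral N)"
    using assms by (simp add: c_def)
  have pc: "p \<otimes>\<^bsub>dihedral N\<^esub> c = d \<otimes>\<^bsub>dihedral N\<^esub> p"
    using assms by (simp add: c_def m_assoc[symmetric])
  have lt: "fst c < N" "fst p < N"
    using c assms(3) by (auto simp: carrier_dihedral)
  have "even (fst p + fst c) \<longleftrightarrow> even (fst d + fst p)"
    using dihedral_mult_even_iff[OF \<open>even N\<close>] pc lt by metis
  then show "even (fst c) \<longleftrightarrow> even (fst d)"
    by auto
  have "(snd p \<noteq> snd c) = (snd d \<noteq> snd p)"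
    using pc dihedral_mult_int(2) lt by metis
  then show "snd c = snd d"
    by auto
qed

text \<open>\<open>S\<close> contains \<open>1\<close>, the central involution \<open>r\<^sup>N\<^sup>/\<^sup>2\<close>, conjugates \<open>r\<^sup>i s\<close> and \<open>r\<^sup>j s\<close> of
  \<open>s\<close> and \<open>r s\<close> with \<open>i\<close> even and \<open>j\<close> odd, and their product \<open>r\<^sup>i\<^sup>-\<^sup>j\<close>. For \<open>4 | N\<close> these
  five are told apart by the parity of the rotation index, which conjugation preserves
  as \<open>N\<close> is even, and by the reflection bit.\<close>
lemma dihedral_five_le_card_if_meets_all_involution_classes:
  assumes "4 dvd N" "submonoid S (dihedral N)" "meets_all_involution_classes (dihedral N) S"
  shows "5 \<le> card S"
proof -
  note S = submonoid.subset[OF assms(2)] submonoid.one_closed[OF assms(2)]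
  note closed = submonoid.m_closed[OF assms(2)]
  note involutions = assms(3)[unfolded meets_all_involution_classes_def, rule_format]
  have "0 < N"
    using S by (auto simp: carrier_dihedral one_dihedral)
  interpret group "dihedral N"
    using group_dihedral \<open>0 < N\<close> .
  define m where "m = N div 2"
  have N: "N = 2 * m" "even m" "0 < m"
    using \<open>4 dvd N\<close> \<open>0 < N\<close> by (auto simp: m_def)
  have reflection_conjugate: "\<exists>x\<in>S. even (fst x) = even j \<and> snd x" if "j < N" for j
  proof -
    have "(j, True) \<in> carrier (dihedral N)" "(j, True) \<noteq> \<one>\<^bsub>dihedral N\<^esub>"
        "(j, True) \<otimes>\<^bsub>dihedral N\<^esub> (j, True) = \<one>\<^bsub>dihedral N\<^esub>"
      using that by (simp_all add: carrier_dihedral one_dihedral dihedral_mult)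
    then obtain p where "p \<in> carrier (dihedral N)"
        "inv\<^bsub>dihedral N\<^esub> p \<otimes>\<^bsub>dihedral N\<^esub> (j, True) \<otimes>\<^bsub>dihedral N\<^esub> p \<in> S"
      using involutions by blast
    then show ?thesis
      using dihedral_conjugate_invariants[of N p "(j, True)"] N \<open>0 < N\<close> that
      by (fastforce simp: carrier_dihedral)
  qed
  obtain u where u: "u \<in> S" "even (fst u)" "snd u"
    using reflection_conjugate[of 0] \<open>0 < N\<close> by auto
  obtain v where v: "v \<in> S" "odd (fst v)" "snd v"
    using reflection_conjugate[of 1] N by auto
  obtain w where w: "w \<in> S" "odd (fst w)" "\<not> snd w"
  proof
    show "u \<otimes>\<^bsub>dihedral N\<^esub> v \<in> S" "odd (fst (u \<otimes>\<^bsub>dihedral N\<^esub> v))"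
        "\<not> snd (u \<otimes>\<^bsub>dihedral N\<^esub> v)"
      using closed[OF u(1) v(1)] dihedral_mult_even_iff[of N v u] dihedral_mult_int(2)[of v N u] u v N S
      by (auto simp: carrier_dihedral)
  qed
  define z where "z = (m, False)"
  have z: "z \<in> carrier (dihedral N)" "z \<noteq> \<one>\<^bsub>dihedral N\<^esub>" "z \<otimes>\<^bsub>dihedral N\<^esub> z = \<one>\<^bsub>dihedral N\<^esub>"
    using N by (simp_all add: z_def carrier_dihedral one_dihedral dihedral_mult flip: mult_2)
  have central: "x \<otimes>\<^bsub>dihedral N\<^esub> z = z \<otimes>\<^bsub>dihedral N\<^esub> x" for x
    using N by (cases x) (simp add: z_def dihedral_mult add.commute)
  obtain p where p: "p \<in> carrier (dihedral N)"
      "inv\<^bsub>dihedral N\<^esub> p \<otimes>\<^bsub>dihedral N\<^esub> z \<otimes>\<^bsub>dihedral N\<^esub> p \<in> S"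
    using involutions z by blast
  moreover have "inv\<^bsub>dihedral N\<^esub> p \<otimes>\<^bsub>dihedral N\<^esub> z \<otimes>\<^bsub>dihedral N\<^esub> p = z"
    using p(1) z(1) by (simp add: m_assoc central[symmetric] m_assoc[symmetric])
  ultimately have "z \<in> S"
    by simp
  have "{\<one>\<^bsub>dihedral N\<^esub>, z, u, v, w} \<subseteq> S"
    using S(2) \<open>z \<in> S\<close> u v w by auto
  moreover have "distinct [\<one>\<^bsub>dihedral N\<^esub>, z, u, v, w]"
    using u v w N by (auto simp: z_def one_dihedral)
  then have "card {\<one>\<^bsub>dihedral N\<^esub>, z, u, v, w} = 5"
    using distinct_card by fastforce
  moreover have "finite S"
    using S(1) by (rule finite_subset) (simp add: carrier_dihedral)
  ultimately show ?thesis
    by (metis card_mono)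
qed

lemma mod_4_eq_2_if_one_rotational_dihedral:
  assumes "0 < N" "one_rotational (dihedral N) 4 FF"
  shows "N mod 4 = 2"
proof -
  interpret group "dihedral N"
    using group_dihedral \<open>0 < N\<close> .
  have "2 * N = 4 * card FF"
    using card_eq_mult_card_k_factorization[of "carrier (dihedral N)" 4 FF] assms(2)
    by (simp add: one_rotational_def Gbar_eq carrier_dihedral card_cartesian_product)
  then have "even N"
    by presburger
  obtain S where "submonoid S (dihedral N)" "card S = 4" "meets_all_involution_classes (dihedral N) S"
    using one_rotational_stabilizer[OF assms(2)] by auto
  then have "\<not> 4 dvd N"
    using dihedral_five_le_card_if_meets_all_involution_classes[of N S] by fastforce
  then show ?thesis
    using \<open>even N\<close> by presburger
qed

section \<open>Lifted factorizations and sufficiency\<close>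

text \<open>The pull-back along \<open>w\<close> of the perfect matching \<open>{{\<infinity>, c}} \<union> {{a, 2c - a} | a \<noteq> c}\<close>
  of \<open>\<int>/m \<union> {\<infinity>}\<close> (\<open>m\<close> odd): edges over \<open>{a, b}\<close> lift to all pairs of fibre elements, and
  the fibre over \<open>c\<close> becomes a clique joined to \<open>\<infinity>\<close>.\<close>
definition lift_factor :: "'a set \<Rightarrow> ('a \<Rightarrow> int) \<Rightarrow> int \<Rightarrow> int \<Rightarrow> 'a option set set" where
  "lift_factor V w m c =
     {{None, Some x} | x. x \<in> V \<and> [w x = c] (mod m)} \<union>
     {{Some x, Some y} | x y. x \<in> V \<and> y \<in> V \<and> x \<noteq> y \<and> [w x + w y = 2 * c] (mod m)}"

lemma None_mem_lift_factor_iff [simp]: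
  "{None, Some x} \<in> lift_factor V w m c \<longleftrightarrow> x \<in> V \<and> [w x = c] (mod m)"
  by (auto simp: lift_factor_def doubleton_eq_iff)

lemma Some_mem_lift_factor_iff [simp]:
  "{Some x, Some y} \<in> lift_factor V w m c \<longleftrightarrow> x \<in> V \<and> y \<in> V \<and> x \<noteq> y \<and> [w x + w y = 2 * c] (mod m)"
  by (auto simp: lift_factor_def doubleton_eq_iff add.commute)

lemma lift_factor_subset: "lift_factor V w m c \<subseteq> complete_edges (insert None (Some ` V))"
  by (auto simp: lift_factor_def)

lemma lift_factor_cases:
  assumes "e \<in> lift_factor V w m c"
  obtains x where "x \<in> V" "[w x = c] (mod m)" "e = {None, Some x}"
    | x y where "x \<in> V" "y \<in> V" "x \<noteq> y" "[w x + w y = 2 * c] (mod m)" "e = {Some x, Some y}"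
  using assms by (auto simp: lift_factor_def)

lemma lift_factor_cong:
  assumes "[c = c'] (mod m)"
  shows "lift_factor V w m c = lift_factor V w m c'"
proof -
  have "[a = c] (mod m) \<longleftrightarrow> [a = c'] (mod m)" for a
    using assms cong_sym cong_trans by meson
  moreover have "[a = 2 * c] (mod m) \<longleftrightarrow> [a = 2 * c'] (mod m)" for a
    using cong_scalar_left[OF assms, of 2] cong_sym cong_trans by meson
  ultimately show ?thesis
    by (simp add: lift_factor_def)
qed

lemma cong_double_cancel:
  fixes a b m :: int
  assumes "odd m"
  shows "[2 * a = 2 * b] (mod m) \<longleftrightarrow> [a = b] (mod m)"
  using assms by (simp add: cong_mult_lcancel)

lemma cong_add_left_iff_diff:
  fixes a b c m :: int
  shows "[a + b = c] (mod m) \<longleftrightarrow> [b = c - a] (mod m)"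
  by (simp add: cong_iff_dvd_diff algebra_simps)

lemma card_edges_at_None_lift_factor:
  "card {e \<in> lift_factor V w m c. None \<in> e} = card {x \<in> V. [w x = c] (mod m)}"
proof -
  have "{e \<in> lift_factor V w m c. None \<in> e} = (\<lambda>x. {None, Some x}) ` {x \<in> V. [w x = c] (mod m)}"
    by (auto elim: lift_factor_cases)
  moreover have "inj_on (\<lambda>x. {None, Some x}) {x \<in> V. [w x = c] (mod m)}"
    by (auto simp: inj_on_def doubleton_eq_iff)
  ultimately show ?thesis
    by (simp add: card_image)
qed

lemma edges_at_Some_lift_factor:
  assumes "x \<in> V"
  shows "{e \<in> lift_factor V w m c. Some x \<in> e} =
    (if [w x = c] (mod m) then {{None, Some x}} else {}) \<union>
    (\<lambda>y. {Some x, Some y}) ` ({y \<in> V. [w y = 2 * c - w x] (mod m)} - {x})"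
    (is "?L = ?R")
proof (intro equalityI subsetI)
  fix e assume "e \<in> ?L"
  then have e: "e \<in> lift_factor V w m c" "Some x \<in> e"
    by auto
  from e(1) show "e \<in> ?R"
  proof (cases rule: lift_factor_cases)
    case (1 x')
    then show ?thesis
      using e(2) by auto
  next
    case (2 x' y')
    have other: "e \<in> ?R" if "y \<in> V" "y \<noteq> x" "[w x + w y = 2 * c] (mod m)" "e = {Some x, Some y}" for y
      using that by (intro UnI2 rev_image_eqI[of y]) (simp_all add: cong_add_left_iff_diff)
    show ?thesis
    proof (cases "x' = x")
      case True
      then show ?thesis
        using 2 by (intro other[of y']) simp_all
    next
      case False
      then have "y' = x"
        using e(2) 2 by auto
      then show ?thesis
        using 2 by (intro other[of x']) (auto simp: add.commute insert_commute)
    qed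
  qed
next
  fix e assume "e \<in> ?R"
  then consider "[w x = c] (mod m)" "e = {None, Some x}"
    | y where "y \<in> V" "y \<noteq> x" "[w y = 2 * c - w x] (mod m)" "e = {Some x, Some y}"
    by (auto split: if_splits)
  then show "e \<in> ?L"
    by cases (use assms in \<open>simp_all add: cong_add_left_iff_diff\<close>)
qed

lemma k_factor_lift_factor:
  assumes "odd m" "finite V" and fibres: "\<And>a. card {x \<in> V. [w x = a] (mod m)} = k"
  shows "k_factor (insert None (Some ` V)) k (lift_factor V w m c)"
  unfolding k_factor_def
proof (intro conjI ballI)
  show "lift_factor V w m c \<subseteq> complete_edges (insert None (Some ` V))"
    by (rule lift_factor_subset)
  fix v assume "v \<in> insert None (Some ` V)"
  then consider "v = None" | x where "x \<in> V" "v = Some x"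
    by auto
  then show "card {e \<in> lift_factor V w m c. v \<in> e} = k"
  proof cases
    case 1
    then show ?thesis
      by (simp only: card_edges_at_None_lift_factor fibres)
  next
    case (2 x)
    define B where "B = {y \<in> V. [w y = 2 * c - w x] (mod m)}"
    have B: "card B = k" "finite B"
      using fibres \<open>finite V\<close> by (simp_all add: B_def)
    have "x \<in> B \<longleftrightarrow> [2 * w x = 2 * c] (mod m)"
      using \<open>x \<in> V\<close> cong_add_left_iff_diff[of "w x" "w x" "2 * c" m] by (simp add: B_def)
    then have xB: "x \<in> B \<longleftrightarrow> [w x = c] (mod m)"
      using cong_double_cancel[OF \<open>odd m\<close>] by simp
    let ?pairs = "(\<lambda>y. {Some x, Some y}) ` (B - {x})"
    have pairs: "card ?pairs = card (B - {x})" "finite ?pairs" "{None, Some x} \<notin> ?pairs"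
      using B(2) by (auto simp: card_image inj_on_def doubleton_eq_iff)
    have edges: "{e \<in> lift_factor V w m c. v \<in> e} =
        (if [w x = c] (mod m) then {{None, Some x}} else {}) \<union> ?pairs"
      using edges_at_Some_lift_factor[OF \<open>x \<in> V\<close>] \<open>v = Some x\<close> by (simp add: B_def)
    show ?thesis
    proof (cases "[w x = c] (mod m)")
      case True
      then have "card (B - {x}) = k - 1" "0 < k"
        using B xB by (auto simp: card_gt_0_iff)
      then show ?thesis
        using edges pairs True by simp
    next
      case False
      then show ?thesis
        using edges pairs B xB by simp
    qed
  qed
qed

lemma lift_factor_index_cong:
  assumes "odd m" "e \<in> lift_factor V w m c" "e \<in> lift_factor V w m c'"
  shows "[c = c'] (mod m)"
  using assms(2)
proof (cases rule: lift_factor_cases)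
  case (1 x)
  then show ?thesis
    using assms(3) by (metis None_mem_lift_factor_iff cong_sym cong_trans)
next
  case (2 x y)
  then have "[2 * c = 2 * c'] (mod m)"
    using assms(3) by (metis Some_mem_lift_factor_iff cong_sym cong_trans)
  then show ?thesis
    using cong_double_cancel[OF \<open>odd m\<close>] by simp
qed

lemma lift_factor_exists:
  assumes "odd m" "e \<in> complete_edges (insert None (Some ` V))"
  obtains c where "e \<in> lift_factor V w m c"
  using assms(2)
proof (cases rule: complete_edges_option_cases)
  case (1 x)
  then show ?thesis
    using that[of "w x"] by simp
next
  case (2 x y)
  have "coprime 2 m"
    using \<open>odd m\<close> by simp
  then obtain h where "[2 * h = 1] (mod m)"
    using cong_solve_coprime_int by blast
  then have "[2 * h * (w x + w y) = 1 * (w x + w y)] (mod m)"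
    by (rule cong_scalar_right)
  then have "[w x + w y = 2 * (h * (w x + w y))] (mod m)"
    by (simp add: cong_sym mult.assoc)
  then show ?thesis
    using that[of "h * (w x + w y)"] 2 by simp
qed

lemma k_factorization_lift_factor:
  assumes "odd m" "finite V" and fibres: "\<And>a. card {x \<in> V. [w x = a] (mod m)} = k"
  shows "k_factorization (insert None (Some ` V)) k (range (lift_factor V w m))"
  unfolding k_factorization_def
proof (intro conjI ballI)
  fix F assume "F \<in> range (lift_factor V w m)"
  then show "k_factor (insert None (Some ` V)) k F"
    using k_factor_lift_factor[OF assms] by auto
next
  fix e assume e: "e \<in> complete_edges (insert None (Some ` V))"
  obtain c where c: "e \<in> lift_factor V w m c"
    using lift_factor_exists[OF \<open>odd m\<close> e] .
  show "\<exists>!F. F \<in> range (lift_factor V w m) \<and> e \<in> F"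
  proof (rule ex1I)
    show "lift_factor V w m c \<in> range (lift_factor V w m) \<and> e \<in> lift_factor V w m c"
      using c by simp
  next
    fix F assume "F \<in> range (lift_factor V w m) \<and> e \<in> F"
    then obtain c' where "F = lift_factor V w m c'" "e \<in> lift_factor V w m c'"
      by auto
    then show "F = lift_factor V w m c"
      using lift_factor_index_cong[OF \<open>odd m\<close> _ c] lift_factor_cong by metis
  qed
qed

lemma lift_factor_image:
  assumes f: "bij_betw f V V" and "\<bar>\<epsilon>\<bar> = 1"
    and affine: "\<And>x. x \<in> V \<Longrightarrow> [w (f x) = \<epsilon> * w x + t] (mod m)"
  shows "(\<lambda>e. map_option f ` e) ` lift_factor V w m c = lift_factor V w m (\<epsilon> * c + t)"
proof -
  have "coprime \<epsilon> m"
    using \<open>\<bar>\<epsilon>\<bar> = 1\<close> by (simp add: is_unit_left_imp_coprime)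
  then have scale: "[\<epsilon> * a + s = \<epsilon> * b + s] (mod m) \<longleftrightarrow> [a = b] (mod m)" for a b s
    by (simp add: cong_add_rcancel cong_mult_lcancel)
  have vertex: "[w (f x) = \<epsilon> * c + t] (mod m) \<longleftrightarrow> [w x = c] (mod m)" if "x \<in> V" for x
    using affine[OF that] scale[of "w x" t c] cong_sym cong_trans by meson
  have pair: "[w (f x) + w (f y) = 2 * (\<epsilon> * c + t)] (mod m) \<longleftrightarrow> [w x + w y = 2 * c] (mod m)"
    if "x \<in> V" "y \<in> V" for x y
  proof -
    have "[w (f x) + w (f y) = \<epsilon> * (w x + w y) + 2 * t] (mod m)"
      using cong_add[OF affine[OF that(1)] affine[OF that(2)]] by (simp add: algebra_simps)
    moreover have "2 * (\<epsilon> * c + t) = \<epsilon> * (2 * c) + 2 * t"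
      by (simp add: algebra_simps)
    ultimately show ?thesis
      using scale[of "w x + w y" "2 * t" "2 * c"] cong_sym cong_trans by metis
  qed
  have fV: "x \<in> V \<Longrightarrow> f x \<in> V" "x \<in> V \<Longrightarrow> y \<in> V \<Longrightarrow> f x = f y \<longleftrightarrow> x = y" for x y
    using f by (auto simp: bij_betw_def inj_on_eq_iff)
  show ?thesis
  proof (intro equalityI subsetI)
    fix e' assume "e' \<in> (\<lambda>e. map_option f ` e) ` lift_factor V w m c"
    then obtain e where e: "e \<in> lift_factor V w m c" "e' = map_option f ` e"
      by auto
    from e(1) show "e' \<in> lift_factor V w m (\<epsilon> * c + t)"
      by (cases rule: lift_factor_cases) (use e(2) vertex pair fV in auto)
  next
    fix e' assume "e' \<in> lift_factor V w m (\<epsilon> * c + t)"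
    then show "e' \<in> (\<lambda>e. map_option f ` e) ` lift_factor V w m c"
    proof (cases rule: lift_factor_cases)
      case (1 x')
      then obtain x where "x \<in> V" "x' = f x"
        using f by (auto simp: bij_betw_def)
      then show ?thesis
        using 1 vertex by (intro rev_image_eqI[of "{None, Some x}"]) auto
    next
      case (2 x' y')
      then obtain x y where "x \<in> V" "y \<in> V" "x' = f x" "y' = f y"
        using f by (metis bij_betw_imp_surj_on imageE)
      then show ?thesis
        using 2 pair fV by (intro rev_image_eqI[of "{Some x, Some y}"]) auto
    qed
  qed
qed

definition dihedral_weight :: "nat \<times> bool \<Rightarrow> int" where
  "dihedral_weight x = reflection_sign (snd x) * int (fst x)"

lemma dihedral_weight_mult:
  assumes "y \<in> carrier (dihedral N)"
  shows "[dihedral_weight (x \<otimes>\<^bsub>dihedral N\<^esub> y) =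
    reflection_sign (snd y) * dihedral_weight x + dihedral_weight y] (mod int N)"
proof -
  obtain i a j b where xy: "x = (i, a)" "y = (j, b)"
    by fastforce
  have "j < N"
    using assms xy by (simp add: carrier_dihedral)
  let ?\<epsilon> = reflection_sign
  have "dihedral_weight (x \<otimes>\<^bsub>dihedral N\<^esub> y) = ?\<epsilon> (a \<noteq> b) * ((int i + ?\<epsilon> a * int j) mod int N)"
    using dihedral_mult_int[of y N x] \<open>j < N\<close> by (simp add: dihedral_weight_def xy)
  also have "[\<dots> = ?\<epsilon> (a \<noteq> b) * (int i + ?\<epsilon> a * int j)] (mod int N)"
    by (rule cong_scalar_left) simp
  also have "?\<epsilon> (a \<noteq> b) * (int i + ?\<epsilon> a * int j) = ?\<epsilon> b * (?\<epsilon> a * int i) + ?\<epsilon> b * int j"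
    by (cases a; cases b) (simp_all add: reflection_sign_def)
  finally show ?thesis
    by (simp add: dihedral_weight_def xy)
qed

lemma card_residue_class_below_double:
  assumes "0 < m"
  shows "card {i \<in> {..<2 * m}. [int i = a] (mod int m)} = 2"
proof -
  define r where "r = nat (a mod int m)"
  have "r < m"
    using assms by (simp add: r_def nat_less_iff)
  have "[int i = a] (mod int m) \<longleftrightarrow> i mod m = r" for i
  proof -
    have "[int i = a] (mod int m) \<longleftrightarrow> int (i mod m) = a mod int m"
      by (simp add: cong_def of_nat_mod)
    then show ?thesis
      using assms by (auto simp: r_def)
  qed
  moreover have "i mod m = r \<longleftrightarrow> i = r \<or> i = r + m" if "i < 2 * m" for i
  proof (cases "i < m")
    case False
    then have "i mod m = i - m"
      using that by (simp add: le_mod_geq)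
    then show ?thesis
      using False \<open>r < m\<close> by auto
  qed (use \<open>r < m\<close> in auto)
  ultimately have "{i \<in> {..<2 * m}. [int i = a] (mod int m)} = {r, r + m}"
    using \<open>r < m\<close> by auto
  then show ?thesis
    using assms by simp
qed

lemma card_dihedral_weight_fibre:
  assumes "N = 2 * m" "0 < m"
  shows "card {x \<in> carrier (dihedral N). [dihedral_weight x = a] (mod int m)} = 4"
proof -
  define R where "R c = {i \<in> {..<2 * m}. [int i = c] (mod int m)}" for c
  have minus: "[- int i = a] (mod int m) \<longleftrightarrow> [int i = - a] (mod int m)" for i
    using cong_minus_minus_iff[of "int i" "- a" "int m"] by simp
  have "{x \<in> carrier (dihedral N). [dihedral_weight x = a] (mod int m)} =
      (\<lambda>i. (i, False)) ` R a \<union> (\<lambda>i. (i, True)) ` R (- a)"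
  proof (rule Set.set_eqI)
    fix x :: "nat \<times> bool"
    obtain i b where x: "x = (i, b)"
      by fastforce
    show "x \<in> {x \<in> carrier (dihedral N). [dihedral_weight x = a] (mod int m)} \<longleftrightarrow>
        x \<in> (\<lambda>i. (i, False)) ` R a \<union> (\<lambda>i. (i, True)) ` R (- a)"
      using assms(1) minus[of i] by (cases b) (auto simp: x R_def carrier_dihedral dihedral_weight_def reflection_sign_def)
  qed
  moreover have "card ((\<lambda>i. (i, False)) ` R a \<union> (\<lambda>i. (i, True)) ` R (- a)) = card (R a) + card (R (- a))"
  proof (subst card_Un_disjoint)
    show "card ((\<lambda>i. (i, False)) ` R a) + card ((\<lambda>i. (i, True)) ` R (- a)) = card (R a) + card (R (- a))"
      by (simp add: card_image inj_on_def)
  qed (auto simp: R_def)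
  ultimately show ?thesis
    using card_residue_class_below_double[OF assms(2)] by (simp add: R_def)
qed

lemma is_R_dihedral_4_if_mod_4_eq_2:
  assumes "N mod 4 = 2"
  shows "is_R (dihedral N) 4"
proof -
  define m where "m = N div 2"
  have N: "N = 2 * m" "odd m" "0 < m"
    using assms by (auto simp: m_def elim: oddE) presburger+
  interpret group "dihedral N"
    using group_dihedral N by simp
  let ?FF = "range (lift_factor (carrier (dihedral N)) dihedral_weight (int m))"
  have "k_factorization (Gbar (dihedral N)) 4 ?FF"
    unfolding Gbar_eq using N
    by (intro k_factorization_lift_factor card_dihedral_weight_fibre) (auto simp: carrier_dihedral)
  moreover have "graph_translate (dihedral N) F g \<in> ?FF" if "F \<in> ?FF" "g \<in> carrier (dihedral N)" for F g
  proof -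
    obtain c where F: "F = lift_factor (carrier (dihedral N)) dihedral_weight (int m) c"
      using \<open>F \<in> ?FF\<close> by auto
    have "bij_betw (\<lambda>x. x \<otimes>\<^bsub>dihedral N\<^esub> g) (carrier (dihedral N)) (carrier (dihedral N))"
      by (rule bij_betw_byWitness[where f' = "\<lambda>x. x \<otimes>\<^bsub>dihedral N\<^esub> inv\<^bsub>dihedral N\<^esub> g"])
        (use \<open>g \<in> carrier (dihedral N)\<close> in \<open>auto simp: m_assoc\<close>)
    moreover have "\<bar>reflection_sign (snd g)\<bar> = 1"
      by (simp add: reflection_sign_def)
    moreover have "[dihedral_weight (x \<otimes>\<^bsub>dihedral N\<^esub> g) =
        reflection_sign (snd g) * dihedral_weight x + dihedral_weight g] (mod int m)" for x
      using dihedral_weight_mult[OF \<open>g \<in> carrier (dihedral N)\<close>, of x] N(1)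
      by (auto intro: cong_dvd_modulus)
    ultimately have "graph_translate (dihedral N) F g =
        lift_factor (carrier (dihedral N)) dihedral_weight (int m) (reflection_sign (snd g) * c + dihedral_weight g)"
      unfolding F graph_translate_def ract_def by (rule lift_factor_image)
    then show ?thesis
      by simp
  qed
  ultimately show ?thesis
    unfolding is_R_def one_rotational_def by blast
qed

theorem theorem3p1:
  fixes N :: nat
  assumes "N \<ge> 2"
  shows "is_R (dihedral N) 4 \<longleftrightarrow> N mod 4 = 2"
  using mod_4_eq_2_if_one_rotational_dihedral[of N] is_R_dihedral_4_if_mod_4_eq_2 assms
  unfolding is_R_def by fastforce

end
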